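(* Let $\mu, \nu$ be compactly supported probability measures on $\mathbb{R}$, and let $\beta \in \mathbb{R}$, $\gamma > 0$. Then \[ (\nu \otimes \mu)[\partial f] = \frac{1}{\gamma}\int (x - \beta) f(x)\, d\mu(x) \quad \text{for every continuously differentiable } f:\mathbb{R}\to\mathbb{R} \] if and only if $\mu = \Phi_{\beta,\gamma}[\nu]$, i.e. $G_\mu(z) = \dfrac{1}{z - \beta - \gamma G_\nu(z)}$. In particular (case $\beta=0,\gamma=1$), $(\nu\otimes\mu)[\partial f] = \int x f\, d\mu$ for all $C^1$ functions $f$ if and only if $\mu = \Phi_{0,1}[\nu]$.
   Context: $(\partial f)(x,y) = \frac{f(x)-f(y)}{x-y}$ for $x\neq y$ and $(\partial f)(x,x) = f'(x)$; $(\nu\otimes\mu)[F] = \iint F(x,y)\,d\nu(x)\,d\mu(y)$. $G_\mu(z) = \int \frac{d\mu(x)}{z-x}$ is the Cauchy transform. For a probability measure $\nu$, $\beta\in\mathbb{R}$, $\gamma>0$, $\Phi_{\beta,\gamma}[\nu]$ denotes the probability measure $\mu$ with $G_\mu(z) = 1/(z-\beta-\gamma G_\nu(z))$; equivalently, if $\nu$ has Jacobi parameters $(\beta_0,\beta_1,\dots),(\gamma_1,\gamma_2,\dots)$ then $\mu$ has Jacobi parameters $(\beta,\beta_0,\beta_1,\dots),(\gamma,\gamma_1,\gamma_2,\dots)$. *)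

theory Defs
  imports "HOL-Probability.Probability"
begin

definition divdiff :: "(real \<Rightarrow> real) \<Rightarrow> real \<Rightarrow> real \<Rightarrow> real" where
  "divdiff f x y = (if x = y then deriv f x else (f x - f y) / (x - y))"

definition cauchy_transform :: "real measure \<Rightarrow> complex \<Rightarrow> complex" where
  "cauchy_transform M z = (\<integral>x. 1 / (z - complex_of_real x) \<partial>M)"

definition cs_prob :: "real measure \<Rightarrow> bool" where
  "cs_prob M \<longleftrightarrow> prob_space M \<and> sets M = sets borel \<and>
     (\<exists>K. compact K \<and> emeasure M K = 1)"

definition C1_real :: "(real \<Rightarrow> real) \<Rightarrow> bool" where
  "C1_real f \<longleftrightarrow> (\<exists>f'. (\<forall>x. (f has_real_derivative f' x) (at x)) \<and> continuous_on UNIV f')"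

end

theory Submission
  imports Defs
begin

text \<open>
  For compactly supported probability measures \<open>\<mu>, \<nu>\<close> and \<open>\<gamma> > 0\<close> consider the linear defect
  \<open>\<Lambda>(f) = (\<nu> \<otimes> \<mu>)[\<partial>f] - \<gamma>\<^sup>-\<^sup>1 \<integral> (x - \<beta>) f(x) d\<mu>(x)\<close>.  For the resolvent \<open>g\<^sub>z(x) = 1/(z - x)\<close> one has
  \<open>\<partial>g\<^sub>z(x, y) = g\<^sub>z(x) g\<^sub>z(y)\<close>, so the complexified defect at \<open>g\<^sub>z\<close> is
  \<open>G\<^sub>\<nu>(z) G\<^sub>\<mu>(z) - \<gamma>\<^sup>-\<^sup>1((z - \<beta>) G\<^sub>\<mu>(z) - 1)\<close>, which (as \<open>G\<^sub>\<mu>(z) \<noteq> 0\<close>) vanishes iff the subordination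
  relation holds at \<open>z\<close>.  If \<open>\<Lambda>\<close> vanishes on all \<open>C\<^sup>1\<close> functions, apply this to \<open>Re g\<^sub>z\<close> and \<open>Im g\<^sub>z\<close>.
  Conversely, expanding in \<open>w = 1/z\<close> shows that the resolvent defect is \<open>\<Sum>\<^sub>n \<Lambda>(x\<^sup>n) w\<^sup>n\<^sup>+\<^sup>1\<close>; its vanishing
  on a segment of the imaginary axis forces \<open>\<Lambda>(x\<^sup>n) = 0\<close>, and Weierstrass approximation of \<open>f'\<close>
  together with the mean-value bound \<open>|\<partial>f| \<le> sup |f'|\<close> extends this to all \<open>C\<^sup>1\<close> functions.
\<close>

subsection \<open>\<open>C\<^sup>1\<close> functions and divided differences\<close>

text \<open>\<open>f\<close> is continuously differentiable with derivative \<open>f'\<close>; naming the derivative explicitly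
  avoids reasoning about the derivative operator \<open>deriv\<close>.\<close>
definition has_C1_deriv :: "(real \<Rightarrow> real) \<Rightarrow> (real \<Rightarrow> real) \<Rightarrow> bool" where
  "has_C1_deriv f f' \<longleftrightarrow> (\<forall>x. (f has_real_derivative f' x) (at x)) \<and> continuous_on UNIV f'"

lemma C1_real_iff_has_C1_deriv: "C1_real f \<longleftrightarrow> (\<exists>f'. has_C1_deriv f f')"
  unfolding C1_real_def has_C1_deriv_def ..

lemma has_C1_deriv_continuous: "has_C1_deriv f f' \<Longrightarrow> continuous_on UNIV f"
  unfolding has_C1_deriv_def by (meson DERIV_isCont continuous_at_imp_continuous_on)

lemma has_C1_deriv_measurable:
  assumes "has_C1_deriv f f'"
  shows "f \<in> borel_measurable borel" "f' \<in> borel_measurable borel"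
  using assms has_C1_deriv_continuous[OF assms] unfolding has_C1_deriv_def
  by (auto intro: borel_measurable_continuous_onI)

lemma has_C1_deriv_sum:
  assumes "\<And>i. i \<in> I \<Longrightarrow> has_C1_deriv (f i) (f' i)"
  shows "has_C1_deriv (\<lambda>x. \<Sum>i\<in>I. a i * f i x) (\<lambda>x. \<Sum>i\<in>I. a i * f' i x)"
  using assms unfolding has_C1_deriv_def
  by (auto intro!: DERIV_sum DERIV_cmult continuous_intros)

lemma has_C1_deriv_diff:
  assumes "has_C1_deriv f f'" "has_C1_deriv g g'"
  shows "has_C1_deriv (\<lambda>x. f x - g x) (\<lambda>x. f' x - g' x)"
  using assms unfolding has_C1_deriv_def by (auto intro!: DERIV_diff continuous_intros)

lemma has_C1_deriv_power: "has_C1_deriv (\<lambda>x. x ^ n) (\<lambda>x. real n * x ^ (n - 1))"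
  unfolding has_C1_deriv_def using DERIV_pow[of n] by (auto intro!: continuous_intros)

definition ddiff :: "(real \<Rightarrow> real) \<Rightarrow> (real \<Rightarrow> real) \<Rightarrow> real \<Rightarrow> real \<Rightarrow> real" where
  "ddiff f f' x y = (if x = y then f' x else (f x - f y) / (x - y))"

lemma divdiff_eq_ddiff:
  assumes "has_C1_deriv f f'"
  shows "divdiff f = ddiff f f'"
  using assms DERIV_imp_deriv unfolding has_C1_deriv_def divdiff_def ddiff_def by (intro ext) auto

lemma ddiff_commute: "ddiff f f' x y = ddiff f f' y x"
  unfolding ddiff_def by (auto simp: field_simps)

lemma ddiff_measurable:
  assumes "has_C1_deriv f f'"
  shows "(\<lambda>p. ddiff f f' (fst p) (snd p)) \<in> borel_measurable (borel \<Otimes>\<^sub>M borel)"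
proof -
  note [measurable] = has_C1_deriv_measurable[OF assms]
  show ?thesis unfolding ddiff_def by measurable
qed

lemma ddiff_bound:
  assumes der: "\<And>x. (f has_real_derivative f' x) (at x)"
    and B: "\<And>t. a \<le> t \<Longrightarrow> t \<le> b \<Longrightarrow> \<bar>f' t\<bar> \<le> B"
    and x: "a \<le> x" "x \<le> b" and y: "a \<le> y" "y \<le> b"
  shows "\<bar>ddiff f f' x y\<bar> \<le> B"
proof -
  have ordered: "\<bar>ddiff f f' u v\<bar> \<le> B" if uv: "a \<le> u" "u < v" "v \<le> b" for u v
  proof -
    obtain t where t: "u < t" "t < v" "f v - f u = (v - u) * f' t"
      using MVT2[of u v f f'] der uv by blast
    have "ddiff f f' u v = f' t" using t uv unfolding ddiff_def by (auto simp: field_simps)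
    then show ?thesis using B[of t] t uv by auto
  qed
  consider "x = y" | "x < y" | "y < x" by linarith
  then show ?thesis
  proof cases
    case 1 then show ?thesis using B x by (simp add: ddiff_def)
  next
    case 2 then show ?thesis using ordered x y by auto
  next
    case 3 then show ?thesis using ordered[of y x] x y ddiff_commute by metis
  qed
qed

lemma increment_bound:
  assumes der: "\<And>x. (f has_real_derivative f' x) (at x)"
    and B: "\<And>t. a \<le> t \<Longrightarrow> t \<le> b \<Longrightarrow> \<bar>f' t\<bar> \<le> B"
    and x: "a \<le> x" "x \<le> b"
  shows "\<bar>f x - f a\<bar> \<le> B * (b - a)"
proof -
  have B0: "0 \<le> B" using B[of x] x by linarith
  have "\<bar>f x - f a\<bar> \<le> B * \<bar>x - a\<bar>"
  proof (cases "x = a")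
    case False
    have "\<bar>ddiff f f' x a\<bar> \<le> B" using ddiff_bound[OF der B] x by auto
    then have "\<bar>f x - f a\<bar> / \<bar>x - a\<bar> \<le> B" using False by (simp add: ddiff_def abs_divide)
    then show ?thesis using False by (simp add: divide_le_eq)
  qed simp
  also have "\<dots> \<le> B * (b - a)" using B0 x by (intro mult_left_mono) auto
  finally show ?thesis .
qed

lemma continuous_bounded_on_interval:
  fixes h :: "real \<Rightarrow> real"
  assumes "continuous_on UNIV h"
  obtains B where "\<And>x. \<bar>x\<bar> \<le> R \<Longrightarrow> \<bar>h x\<bar> \<le> B"
proof -
  have "compact (h ` {-R..R})"
    by (rule compact_continuous_image[OF continuous_on_subset[OF assms] compact_Icc]) auto
  then obtain B where "\<forall>y\<in>h ` {-R..R}. norm y \<le> B"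
    using compact_imp_bounded bounded_iff by metis
  then show ?thesis using that[of B] by (auto simp: abs_le_iff)
qed

lemma polynomial_antiderivative:
  fixes a :: "nat \<Rightarrow> real"
  obtains q where "\<And>x. (\<Sum>i\<le>Suc n. q i * (real i * x ^ (i - 1))) = (\<Sum>i\<le>n. a i * x ^ i)"
    and "(\<Sum>i\<le>Suc n. q i * t ^ i) = v"
proof -
  define b where "b j = a j / real (Suc j)" for j
  define q where "q i = (case i of 0 \<Rightarrow> v - (\<Sum>j\<le>n. b j * t ^ Suc j) | Suc j \<Rightarrow> b j)" for i
  have "(\<Sum>i\<le>Suc n. q i * (real i * x ^ (i - 1))) = (\<Sum>i\<le>n. a i * x ^ i)" for x
    unfolding sum.atMost_Suc_shift by (simp add: q_def b_def)
  moreover have "(\<Sum>i\<le>Suc n. q i * t ^ i) = v"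
    unfolding sum.atMost_Suc_shift by (simp add: q_def)
  ultimately show ?thesis using that by blast
qed

subsection \<open>An identity theorem for power series\<close>

text \<open>By induction, once \<open>c\<^sub>0, \<dots>, c\<^sub>k\<^sub>-\<^sub>1\<close> vanish, \<open>c\<^sub>k\<close> is the value at \<open>0\<close> of the continuous function
  \<open>\<Sum>\<^sub>m c\<^sub>m\<^sub>+\<^sub>k w\<^sup>m\<close>, which vanishes on the segment.\<close>
lemma powser_vanishing_on_segment:
  fixes c :: "nat \<Rightarrow> real" and u :: complex
  assumes R: "R > 0" and C: "C \<ge> 0" and growth: "\<And>n. \<bar>c n\<bar> \<le> C * real (Suc n) * R ^ n"
    and u: "u \<noteq> 0" and \<delta>: "\<delta> > 0"
    and vanish: "\<And>s. 0 < s \<Longrightarrow> s \<le> \<delta> \<Longrightarrow>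
        (\<lambda>n. complex_of_real (c n) * (complex_of_real s * u) ^ Suc n) sums 0"
  shows "c k = 0"
proof (induction k rule: less_induct)
  case (less k)
  define F where "F t = (\<Sum>m. complex_of_real (c (m + k)) * t ^ m)" for t :: complex
  define K :: complex where "K = complex_of_real (1 / (2 * R))"
  have nK: "norm K = 1 / (2 * R)" unfolding K_def norm_of_real using R by simp
  have summK: "summable (\<lambda>m. complex_of_real (c (m + k)) * K ^ m)"
  proof (rule summable_norm_cancel, rule summable_comparison_test)
    show "summable (\<lambda>m. C * R ^ k * (real (Suc m) * (1/2) ^ m + real k * (1/2) ^ m))"
    proof (rule summable_mult, rule summable_add)
      show "summable (\<lambda>m. real (Suc m) * (1 / 2) ^ m)"
        using geometric_deriv_sums[of "1/2::real"] by (auto dest: sums_summable)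
      show "summable (\<lambda>m. real k * (1 / 2 :: real) ^ m)"
        by (rule summable_mult, rule summable_geometric) auto
    qed
    show "\<exists>N. \<forall>n\<ge>N. norm (norm (complex_of_real (c (n + k)) * K ^ n))
        \<le> C * R ^ k * (real (Suc n) * (1 / 2) ^ n + real k * (1 / 2) ^ n)"
    proof (intro exI allI impI)
      fix n :: nat
      have "norm (norm (complex_of_real (c (n + k)) * K ^ n)) = \<bar>c (n+k)\<bar> * (1/(2*R))^n"
        using R by (simp add: nK norm_mult norm_power)
      also have "\<dots> \<le> C * real (Suc (n+k)) * R^(n+k) * (1/(2*R))^n"
        by (intro mult_right_mono growth) (use R in auto)
      also have "\<dots> = C * R ^ k * (real (Suc n) * (1 / 2) ^ n + real k * (1 / 2) ^ n)"
        using R by (simp add: power_add power_divide field_simps)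
      finally show "norm (norm (complex_of_real (c (n + k)) * K ^ n))
        \<le> C * R ^ k * (real (Suc n) * (1 / 2) ^ n + real k * (1 / 2) ^ n)" .
    qed
  qed
  have F_cont: "isCont F 0"
    unfolding F_def by (rule isCont_powser[OF summK]) (use R in \<open>simp add: nK\<close>)
  have F_zero: "F (complex_of_real s * u) = 0" if s: "0 < s" "s \<le> \<delta>" for s
  proof -
    define t where "t = complex_of_real s * u"
    have t0: "t \<noteq> 0" using s u by (simp add: t_def)
    have "(\<lambda>i. complex_of_real (c (i + k)) * t ^ Suc (i + k)) sums 0"
      using vanish[OF s] sums_zero_iff_shift[of k "\<lambda>n. complex_of_real (c n) * t ^ Suc n" 0] less
      by (simp add: t_def)
    then have "(\<lambda>i. t ^ Suc k * (complex_of_real (c (i + k)) * t ^ i)) sums (t ^ Suc k * 0)"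
      by (simp add: power_add mult_ac)
    then have "(\<lambda>i. complex_of_real (c (i + k)) * t ^ i) sums 0"
      by (subst (asm) sums_mult_iff) (use t0 in auto)
    then show ?thesis unfolding F_def t_def[symmetric] by (simp add: sums_iff)
  qed
  have lim_F0: "((\<lambda>s. F (complex_of_real s * u)) \<longlongrightarrow> F 0) (at_right 0)"
  proof (rule isCont_tendsto_compose[OF F_cont])
    show "((\<lambda>s. complex_of_real s * u) \<longlongrightarrow> 0) (at_right 0)"
      by (intro tendsto_eq_intros) (auto intro: tendsto_ident_at)
  qed
  have "eventually (\<lambda>s. F (complex_of_real s * u) = 0) (at_right (0::real))"
    unfolding eventually_at_right_field using \<delta> by (intro exI[of _ \<delta>]) (auto intro!: F_zero)
  then have "F 0 = 0" using tendsto_unique[OF _ lim_F0 tendsto_eventually] by simp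
  then show ?case unfolding F_def by simp
qed

lemma (in prob_space) norm_integral_le_const:
  fixes g :: "'a \<Rightarrow> 'b::{banach,second_countable_topology}"
  assumes "g \<in> borel_measurable M" "AE x in M. norm (g x) \<le> B"
  shows "norm (integral\<^sup>L M g) \<le> B"
proof -
  have g: "integrable M g" using integrable_const_bound assms by blast
  have "norm (integral\<^sup>L M g) \<le> (\<integral>x. norm (g x) \<partial>M)" by (rule integral_norm_bound)
  also have "\<dots> \<le> (\<integral>x. B \<partial>M)" by (rule integral_mono_AE) (use g assms in auto)
  also have "\<dots> = B" by (simp add: prob_space)
  finally show ?thesis .
qed

lemma (in prob_space) sums_integral_dominated:
  fixes f :: "nat \<Rightarrow> 'a \<Rightarrow> 'b::{banach,second_countable_topology}"
  assumes meas: "\<And>n. f n \<in> borel_measurable M" and S_meas: "S \<in> borel_measurable M"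
    and dom: "\<And>n. AE x in M. norm (f n x) \<le> b n" and b: "summable b"
    and sums: "AE x in M. (\<lambda>n. f n x) sums S x"
  shows "(\<lambda>n. integral\<^sup>L M (f n)) sums integral\<^sup>L M S"
proof -
  have int: "integrable M (f n)" for n using integrable_const_bound meas dom by blast
  have "AE x in M. \<forall>n. norm (f n x) \<le> b n" using dom by (simp add: AE_all_countable)
  then have summ_pointwise: "AE x in M. summable (\<lambda>i. norm (f i x))"
    by eventually_elim (auto intro: summable_comparison_test[OF _ b])
  have summ_integrals: "summable (\<lambda>i. \<integral>x. norm (f i x) \<partial>M)"
    by (rule summable_comparison_test[OF _ b], intro exI allI impI norm_integral_le_const)
       (use meas dom in auto)
  have "(\<lambda>n. integral\<^sup>L M (f n)) sums (\<integral>x. (\<Sum>i. f i x) \<partial>M)"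
    by (rule sums_integral[OF int summ_pointwise summ_integrals])
  moreover have "(\<integral>x. (\<Sum>i. f i x) \<partial>M) = integral\<^sup>L M S"
  proof (rule integral_cong_AE)
    show "(\<lambda>x. \<Sum>i. f i x) \<in> borel_measurable M" using meas by measurable
    show "AE x in M. (\<Sum>i. f i x) = S x" using sums by eventually_elim (simp add: sums_unique[symmetric])
  qed (rule S_meas)
  ultimately show ?thesis by simp
qed

subsection \<open>The resolvent \<open>x \<mapsto> 1/(z - x)\<close>\<close>

definition resolvent :: "complex \<Rightarrow> real \<Rightarrow> complex" where
  "resolvent z x = 1 / (z - complex_of_real x)"

lemma cauchy_transform_eq: "cauchy_transform M z = (\<integral>x. resolvent z x \<partial>M)"
  by (simp add: cauchy_transform_def resolvent_def)

lemma nonreal_ne_real: "Im z \<noteq> 0 \<Longrightarrow> z - complex_of_real x \<noteq> 0"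
  by (metis Im_complex_of_real eq_iff_diff_eq_0)

lemma norm_resolvent_le: "Im z \<noteq> 0 \<Longrightarrow> norm (resolvent z x) \<le> 1 / \<bar>Im z\<bar>"
  using abs_Im_le_cmod[of "z - complex_of_real x"]
  unfolding resolvent_def by (simp add: norm_divide frac_le)

lemma continuous_resolvent: "Im z \<noteq> 0 \<Longrightarrow> continuous_on UNIV (resolvent z)"
  unfolding resolvent_def using nonreal_ne_real by (auto intro!: continuous_intros)

lemma measurable_resolvent: "Im z \<noteq> 0 \<Longrightarrow> resolvent z \<in> borel_measurable borel"
  by (rule borel_measurable_continuous_onI[OF continuous_resolvent])

lemma resolvent_has_derivative:
  assumes "Im z \<noteq> 0"
  shows "(resolvent z has_vector_derivative (resolvent z x)^2) (at x)"
proof -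
  have ne: "z - complex_of_real x \<noteq> 0" using nonreal_ne_real[OF assms] .
  have "((\<lambda>t. 1 / (z - t)) has_field_derivative (1 / (z - complex_of_real x))^2) (at (complex_of_real x))"
    by (rule derivative_eq_intros refl | use ne in \<open>simp add: field_simps power2_eq_square\<close>)+
  then show ?thesis unfolding resolvent_def by (rule has_vector_derivative_real_field)
qed

lemma has_C1_deriv_Re_resolvent:
  "Im z \<noteq> 0 \<Longrightarrow> has_C1_deriv (\<lambda>x. Re (resolvent z x)) (\<lambda>x. Re ((resolvent z x)^2))"
  unfolding has_C1_deriv_def using resolvent_has_derivative continuous_resolvent
  by (auto intro!: has_field_derivative_Re continuous_intros)

lemma has_C1_deriv_Im_resolvent:
  "Im z \<noteq> 0 \<Longrightarrow> has_C1_deriv (\<lambda>x. Im (resolvent z x)) (\<lambda>x. Im ((resolvent z x)^2))"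
  unfolding has_C1_deriv_def using resolvent_has_derivative continuous_resolvent
  by (auto intro!: has_field_derivative_Im continuous_intros)

lemma resolvent_diff_quotient:
  assumes "z \<noteq> complex_of_real x" "z \<noteq> complex_of_real y" "x \<noteq> y"
  shows "(resolvent z x - resolvent z y) / complex_of_real (x - y) = resolvent z x * resolvent z y"
proof -
  define p q where "p = z - complex_of_real x" and "q = z - complex_of_real y"
  have "p \<noteq> 0" "q \<noteq> 0" "q - p \<noteq> 0" using assms by (auto simp: p_def q_def)
  then have "(1 / p - 1 / q) / (q - p) = 1 / p * (1 / q)" by (simp add: field_simps)
  moreover have "complex_of_real (x - y) = q - p" by (simp add: p_def q_def)
  ultimately show ?thesis unfolding resolvent_def p_def[symmetric] q_def[symmetric] by simp
qed

lemma ddiff_Re_resolvent: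
  assumes z: "Im z \<noteq> 0"
  shows "ddiff (\<lambda>x. Re (resolvent z x)) (\<lambda>x. Re ((resolvent z x)^2)) x y
    = Re (resolvent z x * resolvent z y)"
proof (cases "x = y")
  case False
  have "Re (resolvent z x * resolvent z y)
      = Re ((resolvent z x - resolvent z y) / complex_of_real (x - y))"
    using resolvent_diff_quotient nonreal_ne_real[OF z] False by simp
  also have "\<dots> = (Re (resolvent z x) - Re (resolvent z y)) / (x - y)" by (simp del: of_real_diff)
  finally show ?thesis using False by (simp add: ddiff_def)
qed (simp add: ddiff_def power2_eq_square)

lemma ddiff_Im_resolvent:
  assumes z: "Im z \<noteq> 0"
  shows "ddiff (\<lambda>x. Im (resolvent z x)) (\<lambda>x. Im ((resolvent z x)^2)) x y
    = Im (resolvent z x * resolvent z y)"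
proof (cases "x = y")
  case False
  have "Im (resolvent z x * resolvent z y)
      = Im ((resolvent z x - resolvent z y) / complex_of_real (x - y))"
    using resolvent_diff_quotient nonreal_ne_real[OF z] False by simp
  also have "\<dots> = (Im (resolvent z x) - Im (resolvent z y)) / (x - y)" by (simp del: of_real_diff)
  finally show ?thesis using False by (simp add: ddiff_def)
qed (simp add: ddiff_def power2_eq_square)

lemma resolvent_series:
  assumes w: "w \<noteq> 0" and small: "norm w * \<bar>x\<bar> < 1"
  shows "(\<lambda>n. complex_of_real (x ^ n) * w ^ Suc n) sums resolvent (1 / w) x"
proof -
  have q: "norm (w * complex_of_real x) < 1" using small by (simp add: norm_mult)
  then have ne: "1 - w * complex_of_real x \<noteq> 0" by auto
  have "(\<lambda>n. w * (w * complex_of_real x) ^ n) sums (w * (1 / (1 - w * complex_of_real x)))"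
    by (rule sums_mult[OF geometric_sums[OF q]])
  moreover have "w * (1 / (1 - w * complex_of_real x)) = resolvent (1 / w) x"
    unfolding resolvent_def using w ne by (simp add: field_simps)
  ultimately show ?thesis by (simp add: power_mult_distrib mult_ac)
qed

definition power_ddiff :: "nat \<Rightarrow> real \<Rightarrow> real \<Rightarrow> real" where
  "power_ddiff n x y = (\<Sum>i<n. y ^ (n - Suc i) * x ^ i)"

lemma power_ddiff_diag: "power_ddiff n x x = real n * x ^ (n - 1)"
proof -
  have "power_ddiff n x x = (\<Sum>i<n. x ^ (n - 1))"
    unfolding power_ddiff_def by (intro sum.cong refl) (auto simp: power_add[symmetric])
  then show ?thesis by simp
qed

lemma power_diff_eq_power_ddiff: "x ^ n - y ^ n = (x - y) * power_ddiff n x y"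
  unfolding power_ddiff_def by (rule power_diff_sumr2)

lemma ddiff_power: "ddiff (\<lambda>x. x ^ n) (\<lambda>x. real n * x ^ (n - 1)) x y = power_ddiff n x y"
  by (cases "x = y") (simp_all add: ddiff_def power_ddiff_diag power_diff_eq_power_ddiff)

lemma power_ddiff_bound:
  assumes R: "R \<ge> 1" "\<bar>x\<bar> \<le> R" "\<bar>y\<bar> \<le> R"
  shows "\<bar>power_ddiff n x y\<bar> \<le> real n * R ^ n"
proof -
  have term_bound: "\<bar>y ^ (n - Suc i) * x ^ i\<bar> \<le> R ^ n" if "i < n" for i
  proof -
    have "\<bar>y ^ (n - Suc i) * x ^ i\<bar> \<le> R ^ (n - Suc i) * R ^ i"
      unfolding abs_mult power_abs using R by (intro mult_mono power_mono) auto
    also have "\<dots> = R ^ (n - Suc i + i)" by (simp add: power_add)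
    also have "\<dots> \<le> R ^ n" using R that by (intro power_increasing) auto
    finally show ?thesis .
  qed
  have "\<bar>power_ddiff n x y\<bar> \<le> (\<Sum>i<n. \<bar>y ^ (n - Suc i) * x ^ i\<bar>)"
    unfolding power_ddiff_def by (rule sum_abs)
  also have "\<dots> \<le> of_nat (card {..<n}) * R ^ n" by (rule sum_bounded_above) (use term_bound in auto)
  finally show ?thesis by simp
qed

text \<open>Expansion at infinity of the product \<open>g\<^sub>1\<^sub>/\<^sub>w(x) g\<^sub>1\<^sub>/\<^sub>w(y) = \<Sum>\<^sub>n \<partial>(x\<^sup>n)(x, y) w\<^sup>n\<^sup>+\<^sup>1\<close>:
  off the diagonal take the divided difference of two resolvent series, on the diagonal
  differentiate the geometric series.\<close>
lemma resolvent_product_series: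
  assumes w: "w \<noteq> 0" and small: "norm w * \<bar>x\<bar> < 1" "norm w * \<bar>y\<bar> < 1"
  shows "(\<lambda>n. complex_of_real (power_ddiff n x y) * w ^ Suc n)
    sums (resolvent (1 / w) x * resolvent (1 / w) y)"
proof (cases "x = y")
  case False
  have "(\<lambda>n. (complex_of_real (x ^ n) * w ^ Suc n - complex_of_real (y ^ n) * w ^ Suc n)
      / complex_of_real (x - y))
    sums ((resolvent (1 / w) x - resolvent (1 / w) y) / complex_of_real (x - y))"
    by (intro sums_divide sums_diff resolvent_series w small)
  moreover have "(complex_of_real (x ^ n) * w ^ Suc n - complex_of_real (y ^ n) * w ^ Suc n)
      / complex_of_real (x - y) = complex_of_real (power_ddiff n x y) * w ^ Suc n" for n
  proof -
    have "complex_of_real (x ^ n) * w ^ Suc n - complex_of_real (y ^ n) * w ^ Suc n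
        = complex_of_real (x - y) * (complex_of_real (power_ddiff n x y) * w ^ Suc n)"
      unfolding of_real_power[symmetric] left_diff_distrib[symmetric] of_real_diff[symmetric]
        power_diff_eq_power_ddiff by simp
    then show ?thesis using False by simp
  qed
  moreover have "1 / w \<noteq> complex_of_real t" if "norm w * \<bar>t\<bar> < 1" for t
  proof
    assume "1 / w = complex_of_real t"
    then have "w * complex_of_real t = 1" using w by (simp add: field_simps)
    then show False using that by (metis norm_mult norm_of_real norm_one real_norm_def less_irrefl)
  qed
  ultimately show ?thesis using resolvent_diff_quotient[OF _ _ False] small by simp
next
  case True
  have q: "norm (w * complex_of_real x) < 1" using small by (simp add: norm_mult)
  then have ne: "1 - w * complex_of_real x \<noteq> 0" by auto
  have "(\<lambda>n. w^2 * (of_nat (Suc n) * (w * complex_of_real x) ^ n))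
      sums (w^2 * (1 / (1 - w * complex_of_real x)^2))"
    by (rule sums_mult[OF geometric_deriv_sums[OF q]])
  moreover have "w^2 * (1 / (1 - w * complex_of_real x)^2) = resolvent (1 / w) x * resolvent (1 / w) y"
    unfolding resolvent_def True[symmetric] using w ne by (simp add: field_simps power2_eq_square)
  moreover have "w^2 * (of_nat (Suc n) * (w * complex_of_real x) ^ n)
      = complex_of_real (power_ddiff (Suc n) x y) * w ^ Suc (Suc n)" for n
    unfolding True power_ddiff_diag by (simp add: power_mult_distrib power2_eq_square mult_ac)
  ultimately have "(\<lambda>n. complex_of_real (power_ddiff (Suc n) x y) * w ^ Suc (Suc n))
      sums (resolvent (1 / w) x * resolvent (1 / w) y)"
    by simp
  then show ?thesis unfolding sums_Suc_iff[of "\<lambda>n. complex_of_real (power_ddiff n x y) * w ^ Suc n"]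
    by (simp add: power_ddiff_def)
qed

text \<open>For \<open>a = G\<^sub>\<nu>(z)\<close>, \<open>b = G\<^sub>\<mu>(z) \<noteq> 0\<close> this is the equivalence between the vanishing of the
  complexified defect and the subordination relation.\<close>
lemma subordination_equation_iff:
  fixes a b c z g :: complex
  assumes g: "g \<noteq> 0" and b: "b \<noteq> 0"
  shows "a * b - (1 / g) * ((z - c) * b - 1) = 0 \<longleftrightarrow> b = 1 / (z - c - g * a)"
proof -
  have "a * b - (1 / g) * ((z - c) * b - 1) = 0 \<longleftrightarrow> b * (z - c - g * a) = 1"
    using g by (auto simp: field_simps)
  also have "\<dots> \<longleftrightarrow> b = 1 / (z - c - g * a)"
    using b by (auto simp: eq_divide_eq)
  finally show ?thesis .
qed

subsection \<open>The defect functional for measures supported in \<open>[-R, R]\<close>\<close>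

locale compact_pair = pair_prob_space Nu Mu for Nu Mu :: "real measure" +
  fixes R \<beta> \<gamma> :: real
  assumes sets_Nu: "sets Nu = sets borel" and sets_Mu: "sets Mu = sets borel"
    and R_ge_1: "R \<ge> 1" and gamma_pos: "\<gamma> > 0"
    and supp_Nu: "AE x in Nu. \<bar>x\<bar> \<le> R" and supp_Mu: "AE x in Mu. \<bar>x\<bar> \<le> R"
begin

abbreviation "P \<equiv> Nu \<Otimes>\<^sub>M Mu"

lemma sets_P: "sets P = sets (borel \<Otimes>\<^sub>M (borel :: real measure))"
  by (rule sets_pair_measure_cong[OF sets_Nu sets_Mu])

lemmas measurable_Mu = measurable_cong_sets[OF sets_Mu refl]
lemmas measurable_P = measurable_cong_sets[OF sets_P refl]

lemma supp_P: "AE p in P. \<bar>fst p\<bar> \<le> R \<and> \<bar>snd p\<bar> \<le> R"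
proof (rule AE_pair_measure)
  have "(\<lambda>p::real\<times>real. \<bar>fst p\<bar> \<le> R \<and> \<bar>snd p\<bar> \<le> R) \<in> measurable P (count_space UNIV)"
    unfolding measurable_P by measurable
  then show "{x \<in> space P. \<bar>fst x\<bar> \<le> R \<and> \<bar>snd x\<bar> \<le> R} \<in> sets P"
    by (simp add: pred_def)
  show "AE x in Nu. AE y in Mu. \<bar>fst (x, y)\<bar> \<le> R \<and> \<bar>snd (x, y)\<bar> \<le> R"
    using supp_Nu
  proof eventually_elim
    case (elim x)
    show ?case using supp_Mu by eventually_elim (use elim in simp)
  qed
qed

lemma Mu_bounded_integral:
  fixes g :: "real \<Rightarrow> 'b::{banach,second_countable_topology}"
  assumes "g \<in> borel_measurable borel" "\<And>x. \<bar>x\<bar> \<le> R \<Longrightarrow> norm (g x) \<le> B"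
  shows "integrable Mu g" "norm (integral\<^sup>L Mu g) \<le> B"
proof -
  have m: "g \<in> borel_measurable Mu" using assms(1) measurable_Mu by blast
  have ae: "AE x in Mu. norm (g x) \<le> B" using supp_Mu by eventually_elim (use assms in auto)
  show "integrable Mu g" using M2.integrable_const_bound[OF ae m] .
  show "norm (integral\<^sup>L Mu g) \<le> B" by (rule M2.norm_integral_le_const[OF m ae])
qed

lemma P_bounded_integral:
  fixes g :: "real \<times> real \<Rightarrow> 'b::{banach,second_countable_topology}"
  assumes "g \<in> borel_measurable (borel \<Otimes>\<^sub>M borel)"
    and "\<And>x y. \<bar>x\<bar> \<le> R \<Longrightarrow> \<bar>y\<bar> \<le> R \<Longrightarrow> norm (g (x, y)) \<le> B"
  shows "integrable P g" "norm (integral\<^sup>L P g) \<le> B"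
proof -
  have m: "g \<in> borel_measurable P" using assms(1) measurable_P by blast
  have ae: "AE p in P. norm (g p) \<le> B" using supp_P by eventually_elim (use assms in auto)
  show "integrable P g" using P.integrable_const_bound[OF ae m] .
  show "norm (integral\<^sup>L P g) \<le> B" by (rule P.norm_integral_le_const[OF m ae])
qed

definition defect :: "(real \<Rightarrow> real) \<Rightarrow> (real \<Rightarrow> real) \<Rightarrow> real" where
  "defect f f' = (\<integral>p. ddiff f f' (fst p) (snd p) \<partial>P) - (1/\<gamma>) * (\<integral>x. (x - \<beta>) * f x \<partial>Mu)"

lemma defect_eq_0_iff:
  assumes "has_C1_deriv f f'"
  shows "(\<integral>p. divdiff f (fst p) (snd p) \<partial>P) = (1/\<gamma>) * (\<integral>x. (x - \<beta>) * f x \<partial>Mu)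
    \<longleftrightarrow> defect f f' = 0"
  unfolding defect_def divdiff_eq_ddiff[OF assms] by simp

lemma defect_integrable:
  assumes f: "has_C1_deriv f f'"
  shows "integrable P (\<lambda>p. ddiff f f' (fst p) (snd p))" "integrable Mu (\<lambda>x. (x - \<beta>) * f x)"
proof -
  obtain B where B: "\<And>x. \<bar>x\<bar> \<le> R \<Longrightarrow> \<bar>f' x\<bar> \<le> B"
    using continuous_bounded_on_interval f unfolding has_C1_deriv_def by blast
  obtain B' where B': "\<And>x. \<bar>x\<bar> \<le> R \<Longrightarrow> \<bar>f x\<bar> \<le> B'"
    using continuous_bounded_on_interval has_C1_deriv_continuous[OF f] by blast
  have der: "\<And>x. (f has_real_derivative f' x) (at x)" using f unfolding has_C1_deriv_def by blast
  show "integrable P (\<lambda>p. ddiff f f' (fst p) (snd p))"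
  proof (rule P_bounded_integral(1)[OF ddiff_measurable[OF f]])
    fix x y :: real assume "\<bar>x\<bar> \<le> R" "\<bar>y\<bar> \<le> R"
    then show "norm (ddiff f f' (fst (x, y)) (snd (x, y))) \<le> B"
      using ddiff_bound[OF der, of "-R" R B x y] B by auto
  qed
  note [measurable] = has_C1_deriv_measurable[OF f]
  show "integrable Mu (\<lambda>x. (x - \<beta>) * f x)"
  proof (rule Mu_bounded_integral(1))
    fix x :: real assume x: "\<bar>x\<bar> \<le> R"
    have "\<bar>x - \<beta>\<bar> \<le> R + \<bar>\<beta>\<bar>" using x by linarith
    then show "norm ((x - \<beta>) * f x) \<le> (R + \<bar>\<beta>\<bar>) * B'"
      unfolding real_norm_def abs_mult by (intro mult_mono B' x) auto
  qed measurable
qed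

lemma defect_sum:
  assumes f: "\<And>i. i \<in> I \<Longrightarrow> has_C1_deriv (f i) (f' i)" and I: "finite I"
  shows "defect (\<lambda>x. \<Sum>i\<in>I. a i * f i x) (\<lambda>x. \<Sum>i\<in>I. a i * f' i x)
    = (\<Sum>i\<in>I. a i * defect (f i) (f' i))"
proof -
  have ddiff_sum: "ddiff (\<lambda>x. \<Sum>i\<in>I. a i * f i x) (\<lambda>x. \<Sum>i\<in>I. a i * f' i x) u v
      = (\<Sum>i\<in>I. a i * ddiff (f i) (f' i) u v)" for u v
    unfolding ddiff_def
    by (auto simp: sum_divide_distrib[symmetric] sum_subtractf[symmetric] algebra_simps)
  have 1: "(\<integral>p. ddiff (\<lambda>x. \<Sum>i\<in>I. a i * f i x) (\<lambda>x. \<Sum>i\<in>I. a i * f' i x) (fst p) (snd p) \<partial>P)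
      = (\<Sum>i\<in>I. a i * (\<integral>p. ddiff (f i) (f' i) (fst p) (snd p) \<partial>P))"
    unfolding ddiff_sum by (subst Bochner_Integration.integral_sum) (auto intro!: defect_integrable f)
  have 2: "(\<integral>x. (x - \<beta>) * (\<Sum>i\<in>I. a i * f i x) \<partial>Mu)
      = (\<Sum>i\<in>I. a i * (\<integral>x. (x - \<beta>) * f i x \<partial>Mu))"
    by (simp add: sum_distrib_left mult.left_commute, subst Bochner_Integration.integral_sum)
       (auto intro!: defect_integrable f)
  show ?thesis unfolding defect_def 1 2
    by (simp add: sum_subtractf[symmetric] sum_distrib_left algebra_simps)
qed

lemma defect_diff:
  assumes f: "has_C1_deriv f f'" and g: "has_C1_deriv g g'"
  shows "defect (\<lambda>x. f x - g x) (\<lambda>x. f' x - g' x) = defect f f' - defect g g'"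
proof -
  have ddiff_diff: "ddiff (\<lambda>x. f x - g x) (\<lambda>x. f' x - g' x) u v = ddiff f f' u v - ddiff g g' u v"
    for u v
    unfolding ddiff_def by (auto simp: diff_divide_distrib)
  have weight: "(\<lambda>x. (x - \<beta>) * (f x - g x)) = (\<lambda>x. (x - \<beta>) * f x - (x - \<beta>) * g x)"
    by (simp add: algebra_simps)
  have split_integrals: "(\<integral>p. ddiff f f' (fst p) (snd p) - ddiff g g' (fst p) (snd p) \<partial>P)
     = (\<integral>p. ddiff f f' (fst p) (snd p) \<partial>P) - (\<integral>p. ddiff g g' (fst p) (snd p) \<partial>P)"
    "(\<integral>x. (x - \<beta>) * f x - (x - \<beta>) * g x \<partial>Mu)
     = (\<integral>x. (x - \<beta>) * f x \<partial>Mu) - (\<integral>x. (x - \<beta>) * g x \<partial>Mu)"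
    using defect_integrable[OF f] defect_integrable[OF g] by (auto intro: Bochner_Integration.integral_diff)
  show ?thesis unfolding defect_def ddiff_diff weight split_integrals by (simp add: algebra_simps)
qed

lemma defect_small:
  assumes g: "has_C1_deriv g g'" and small: "\<And>t. \<bar>t\<bar> \<le> R \<Longrightarrow> \<bar>g' t\<bar> \<le> e"
    and g0: "g (-R) = 0"
  shows "\<bar>defect g g'\<bar> \<le> e * (1 + (R + \<bar>\<beta>\<bar>) * (2 * R) / \<gamma>)"
proof -
  have der: "\<And>x. (g has_real_derivative g' x) (at x)" using g unfolding has_C1_deriv_def by blast
  note [measurable] = has_C1_deriv_measurable[OF g]
  have small': "\<And>t. -R \<le> t \<Longrightarrow> t \<le> R \<Longrightarrow> \<bar>g' t\<bar> \<le> e" using small by auto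
  have ddiff_part: "norm (\<integral>p. ddiff g g' (fst p) (snd p) \<partial>P) \<le> e"
  proof (rule P_bounded_integral(2)[OF ddiff_measurable[OF g]])
    fix x y :: real assume "\<bar>x\<bar> \<le> R" "\<bar>y\<bar> \<le> R"
    then show "norm (ddiff g g' (fst (x, y)) (snd (x, y))) \<le> e"
      using ddiff_bound[of g g' "-R" R e x y, OF der small'] by auto
  qed
  have moment_part: "norm (\<integral>x. (x - \<beta>) * g x \<partial>Mu) \<le> (R + \<bar>\<beta>\<bar>) * (e * (2 * R))"
  proof (rule Mu_bounded_integral(2))
    fix x :: real assume x: "\<bar>x\<bar> \<le> R"
    have "\<bar>x - \<beta>\<bar> \<le> R + \<bar>\<beta>\<bar>" using x by linarith
    moreover have "\<bar>g x\<bar> \<le> e * (R - (-R))"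
      using increment_bound[of g g' "-R" R e x, OF der small'] x g0 by auto
    ultimately show "norm ((x - \<beta>) * g x) \<le> (R + \<bar>\<beta>\<bar>) * (e * (2 * R))"
      unfolding real_norm_def abs_mult by (intro mult_mono) auto
  qed measurable
  have "\<bar>defect g g'\<bar>
      \<le> \<bar>\<integral>p. ddiff g g' (fst p) (snd p) \<partial>P\<bar> + \<bar>\<integral>x. (x - \<beta>) * g x \<partial>Mu\<bar> / \<gamma>"
    unfolding defect_def using gamma_pos abs_triangle_ineq4[of "\<integral>p. ddiff g g' (fst p) (snd p) \<partial>P"
      "(\<integral>x. (x - \<beta>) * g x \<partial>Mu) / \<gamma>"] by (simp add: abs_divide)
  also have "\<dots> \<le> e + (R + \<bar>\<beta>\<bar>) * (e * (2 * R)) / \<gamma>"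
    using ddiff_part moment_part gamma_pos by (intro add_mono divide_right_mono) auto
  also have "\<dots> = e * (1 + (R + \<bar>\<beta>\<bar>) * (2 * R) / \<gamma>)" by (simp add: algebra_simps)
  finally show ?thesis .
qed

text \<open>Vanishing of \<open>\<Lambda>\<close> on all monomials implies vanishing on all polynomials (by linearity)
  and then on all \<open>C\<^sup>1\<close> functions: approximate \<open>f'\<close> uniformly on \<open>[-R, R]\<close> by a polynomial and
  subtract its antiderivative through \<open>(-R, f(-R))\<close>.\<close>
lemma defect_polynomial:
  assumes monomials: "\<And>n. defect (\<lambda>x. x ^ n) (\<lambda>x. real n * x ^ (n - 1)) = 0"
  shows "defect (\<lambda>x. \<Sum>i\<le>m. q i * x ^ i) (\<lambda>x. \<Sum>i\<le>m. q i * (real i * x ^ (i - 1))) = 0"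
  using defect_sum[of "{..m}" "\<lambda>i x. x ^ i" "\<lambda>i x. real i * x ^ (i - 1)" q]
    has_C1_deriv_power monomials by simp

lemma defect_approximation:
  assumes monomials: "\<And>n. defect (\<lambda>x. x ^ n) (\<lambda>x. real n * x ^ (n - 1)) = 0"
    and f: "has_C1_deriv f f'" and \<epsilon>: "\<epsilon> > 0"
  shows "\<bar>defect f f'\<bar> \<le> \<epsilon> * (1 + (R + \<bar>\<beta>\<bar>) * (2 * R) / \<gamma>)"
proof -
  have "continuous_on {-R..R} f'"
    using f unfolding has_C1_deriv_def by (auto intro: continuous_on_subset)
  then obtain p where "real_polynomial_function p" and p: "\<And>x. x \<in> {-R..R} \<Longrightarrow> \<bar>f' x - p x\<bar> < \<epsilon>"
    using Stone_Weierstrass_real_polynomial_function[OF compact_Icc _ \<epsilon>] by blast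
  then obtain a n where pa: "p = (\<lambda>x. \<Sum>i\<le>n. a i * x ^ i)"
    unfolding real_polynomial_function_iff_sum by blast
  obtain q where q': "\<And>x. (\<Sum>i\<le>Suc n. q i * (real i * x ^ (i - 1))) = p x"
    and q0: "(\<Sum>i\<le>Suc n. q i * (-R) ^ i) = f (-R)"
    using polynomial_antiderivative[of n a "-R" "f (-R)"] unfolding pa by blast
  define Q where "Q x = (\<Sum>i\<le>Suc n. q i * x ^ i)" for x
  have Q: "has_C1_deriv Q p"
    using has_C1_deriv_sum[of "{..Suc n}" "\<lambda>i x. x ^ i" "\<lambda>i x. real i * x ^ (i - 1)" q]
      has_C1_deriv_power q' unfolding Q_def by simp
  have "defect Q p = 0"
    using defect_polynomial[OF monomials, where m="Suc n" and q=q] q' unfolding Q_def by simp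
  then have "defect f f' = defect (\<lambda>x. f x - Q x) (\<lambda>x. f' x - p x)"
    using defect_diff[OF f Q] by simp
  also have "\<bar>\<dots>\<bar> \<le> \<epsilon> * (1 + (R + \<bar>\<beta>\<bar>) * (2 * R) / \<gamma>)"
  proof (rule defect_small)
    show "has_C1_deriv (\<lambda>x. f x - Q x) (\<lambda>x. f' x - p x)" by (rule has_C1_deriv_diff[OF f Q])
    show "\<bar>f' t - p t\<bar> \<le> \<epsilon>" if "\<bar>t\<bar> \<le> R" for t
      using p[of t] that by (fastforce simp: abs_le_iff)
    show "f (- R) - Q (- R) = 0" using q0 unfolding Q_def by simp
  qed
  finally show ?thesis .
qed

lemma defect_vanishes_if_monomials:
  assumes monomials: "\<And>n. defect (\<lambda>x. x ^ n) (\<lambda>x. real n * x ^ (n - 1)) = 0"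
    and f: "has_C1_deriv f f'"
  shows "defect f f' = 0"
proof -
  define K where "K = 1 + (R + \<bar>\<beta>\<bar>) * (2 * R) / \<gamma>"
  have K: "K > 0" unfolding K_def using gamma_pos R_ge_1 by (auto intro!: add_pos_nonneg)
  have "\<bar>defect f f'\<bar> \<le> 0 + e" if "e > 0" for e
    using defect_approximation[OF monomials f, of "e / K"] that K unfolding K_def by simp
  then show ?thesis using field_le_epsilon[of "\<bar>defect f f'\<bar>" 0] by simp
qed

end

subsection \<open>The defect at the resolvent\<close>

context compact_pair
begin

lemma integrable_resolvent:
  assumes z: "Im z \<noteq> 0"
  shows "integrable Mu (resolvent z)"
  by (rule Mu_bounded_integral(1)[OF measurable_resolvent[OF z] norm_resolvent_le[OF z]])

lemma integrable_resolvent_product: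
  assumes z: "Im z \<noteq> 0"
  shows "integrable P (\<lambda>p. resolvent z (fst p) * resolvent z (snd p))"
proof (rule P_bounded_integral(1))
  note [measurable] = measurable_resolvent[OF z]
  show "(\<lambda>p. resolvent z (fst p) * resolvent z (snd p)) \<in> borel_measurable (borel \<Otimes>\<^sub>M borel)"
    by measurable
  fix x y :: real
  show "norm (resolvent z (fst (x, y)) * resolvent z (snd (x, y))) \<le> 1 / \<bar>Im z\<bar> * (1 / \<bar>Im z\<bar>)"
    unfolding norm_mult by (intro mult_mono norm_resolvent_le z) auto
qed

lemma integrable_weighted_resolvent:
  assumes z: "Im z \<noteq> 0"
  shows "integrable Mu (\<lambda>x. complex_of_real (x - \<beta>) * resolvent z x)"
proof (rule Mu_bounded_integral(1))
  note [measurable] = measurable_resolvent[OF z]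
  show "(\<lambda>x. complex_of_real (x - \<beta>) * resolvent z x) \<in> borel_measurable borel" by measurable
  fix x :: real assume x: "\<bar>x\<bar> \<le> R"
  have "\<bar>x - \<beta>\<bar> \<le> R + \<bar>\<beta>\<bar>" using x by linarith
  then show "norm (complex_of_real (x - \<beta>) * resolvent z x) \<le> (R + \<bar>\<beta>\<bar>) * (1 / \<bar>Im z\<bar>)"
    unfolding norm_mult norm_of_real by (intro mult_mono norm_resolvent_le z) auto
qed

text \<open>The complexified defect at the resolvent \<open>g\<^sub>z\<close>; by \<open>\<partial>g\<^sub>z(x, y) = g\<^sub>z(x) g\<^sub>z(y)\<close> its real and
  imaginary parts are the defects of \<open>Re g\<^sub>z\<close> and \<open>Im g\<^sub>z\<close>.\<close>
definition resolvent_defect :: "complex \<Rightarrow> complex" where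
  "resolvent_defect z = (\<integral>p. resolvent z (fst p) * resolvent z (snd p) \<partial>P)
     - complex_of_real (1/\<gamma>) * (\<integral>x. complex_of_real (x - \<beta>) * resolvent z x \<partial>Mu)"

lemma integral_resolvent_product:
  assumes z: "Im z \<noteq> 0"
  shows "(\<integral>p. resolvent z (fst p) * resolvent z (snd p) \<partial>P)
    = cauchy_transform Nu z * cauchy_transform Mu z"
proof -
  have int: "integrable P (\<lambda>(x, y). resolvent z x * resolvent z y)"
    using integrable_resolvent_product[OF z] by (simp add: case_prod_beta')
  have "(\<integral>p. resolvent z (fst p) * resolvent z (snd p) \<partial>P)
      = (\<integral>x. (\<integral>y. resolvent z x * resolvent z y \<partial>Mu) \<partial>Nu)"
    using integral_fst[OF int] by (simp add: case_prod_beta')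
  also have "\<dots> = (\<integral>x. resolvent z x * cauchy_transform Mu z \<partial>Nu)"
    by (simp only: integral_mult_right_zero cauchy_transform_eq)
  also have "\<dots> = cauchy_transform Nu z * cauchy_transform Mu z"
    by (simp only: integral_mult_left_zero cauchy_transform_eq)
  finally show ?thesis .
qed

lemma resolvent_defect_eq:
  assumes z: "Im z \<noteq> 0"
  shows "resolvent_defect z = cauchy_transform Nu z * cauchy_transform Mu z
      - complex_of_real (1/\<gamma>) * ((z - complex_of_real \<beta>) * cauchy_transform Mu z - 1)"
proof -
  have weight: "complex_of_real (x - \<beta>) * resolvent z x = (z - complex_of_real \<beta>) * resolvent z x - 1"
    for x
    using nonreal_ne_real[OF z, of x] unfolding resolvent_def by (simp add: field_simps)
  have "(\<integral>x. complex_of_real (x - \<beta>) * resolvent z x \<partial>Mu)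
      = (\<integral>x. (z - complex_of_real \<beta>) * resolvent z x - 1 \<partial>Mu)"
    unfolding weight ..
  also have "\<dots> = (\<integral>x. (z - complex_of_real \<beta>) * resolvent z x \<partial>Mu) - (\<integral>x. 1 \<partial>Mu)"
    by (rule Bochner_Integration.integral_diff) (auto intro: integrable_resolvent[OF z])
  also have "\<dots> = (z - complex_of_real \<beta>) * cauchy_transform Mu z - 1"
    unfolding integral_mult_right_zero cauchy_transform_eq by (simp add: M2.prob_space)
  finally show ?thesis unfolding resolvent_defect_def integral_resolvent_product[OF z] by simp
qed

lemma defect_Re_resolvent:
  assumes z: "Im z \<noteq> 0"
  shows "defect (\<lambda>x. Re (resolvent z x)) (\<lambda>x. Re ((resolvent z x)^2)) = Re (resolvent_defect z)"
proof -
  have weight: "(x - \<beta>) * Re (resolvent z x) = Re (complex_of_real (x - \<beta>) * resolvent z x)" for x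
    by (simp del: of_real_diff)
  show ?thesis
    unfolding defect_def resolvent_defect_def ddiff_Re_resolvent[OF z] weight
      integral_Re[OF integrable_resolvent_product[OF z]]
      integral_Re[OF integrable_weighted_resolvent[OF z]]
    by (simp del: of_real_diff)
qed

lemma defect_Im_resolvent:
  assumes z: "Im z \<noteq> 0"
  shows "defect (\<lambda>x. Im (resolvent z x)) (\<lambda>x. Im ((resolvent z x)^2)) = Im (resolvent_defect z)"
proof -
  have weight: "(x - \<beta>) * Im (resolvent z x) = Im (complex_of_real (x - \<beta>) * resolvent z x)" for x
    by (simp del: of_real_diff)
  show ?thesis
    unfolding defect_def resolvent_defect_def ddiff_Im_resolvent[OF z] weight
      integral_Im[OF integrable_resolvent_product[OF z]]
      integral_Im[OF integrable_weighted_resolvent[OF z]]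
    by (simp del: of_real_diff)
qed

text \<open>\<open>G\<^sub>\<mu>(z) \<noteq> 0\<close> off the real axis, since \<open>Im z \<cdot> Im g\<^sub>z(x) < 0\<close> uniformly on the support.\<close>
lemma cauchy_transform_nonzero:
  assumes z: "Im z \<noteq> 0"
  shows "cauchy_transform Mu z \<noteq> 0"
proof -
  define B where "B = (\<bar>Re z\<bar> + R)^2 + (Im z)^2"
  define c where "c = (Im z)^2 / B"
  have B: "B > 0" unfolding B_def using z by (simp add: add_nonneg_pos)
  have Im_resolvent: "Im (resolvent z x) = - Im z / ((Re z - x)^2 + (Im z)^2)" for x
    unfolding resolvent_def by (simp add: Im_divide power2_eq_square)
  have pointwise: "Im z * Im (resolvent z x) \<le> - c" if x: "\<bar>x\<bar> \<le> R" for x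
  proof -
    define D where "D = (Re z - x)^2 + (Im z)^2"
    have D: "D > 0" unfolding D_def using z by (simp add: add_nonneg_pos)
    have "\<bar>Re z - x\<bar> \<le> \<bar>Re z\<bar> + R" using x by linarith
    then have "(Re z - x)^2 \<le> (\<bar>Re z\<bar> + R)^2"
      by (metis abs_ge_zero power2_abs power_mono)
    then have "D \<le> B" unfolding D_def B_def by simp
    have "Im z * Im (resolvent z x) = - ((Im z)^2 / D)"
      unfolding Im_resolvent D_def[symmetric] by (simp add: power2_eq_square)
    also have "\<dots> \<le> - ((Im z)^2 / B)" using \<open>D \<le> B\<close> D by (intro le_imp_neg_le frac_le) auto
    finally show ?thesis by (simp add: c_def)
  qed
  have "Im z * Im (cauchy_transform Mu z) = (\<integral>x. Im z * Im (resolvent z x) \<partial>Mu)"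
    unfolding cauchy_transform_eq integral_Im[OF integrable_resolvent[OF z], symmetric] by simp
  also have "\<dots> \<le> (\<integral>x. - c \<partial>Mu)"
    by (rule integral_mono_AE) (use integrable_resolvent[OF z] supp_Mu pointwise in \<open>auto elim: AE_mp\<close>)
  also have "\<dots> < 0" using z B by (simp add: c_def M2.prob_space)
  finally show ?thesis by auto
qed

lemma resolvent_defect_eq_0_iff:
  assumes z: "Im z \<noteq> 0"
  shows "resolvent_defect z = 0 \<longleftrightarrow>
    cauchy_transform Mu z = 1 / (z - complex_of_real \<beta> - complex_of_real \<gamma> * cauchy_transform Nu z)"
  using subordination_equation_iff[of "complex_of_real \<gamma>" "cauchy_transform Mu z"
      "cauchy_transform Nu z" z "complex_of_real \<beta>"]
    gamma_pos cauchy_transform_nonzero[OF z]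
  unfolding resolvent_defect_eq[OF z] by simp

text \<open>The expansion parameter \<open>w = 1/z\<close> is taken with \<open>|w| R \<le> 1/2\<close>, so the expansions below are
  dominated by geometric series of ratio \<open>1/2\<close> on the support.\<close>
lemma small_parameter:
  assumes "norm w * R \<le> 1/2"
  shows "norm w \<le> 1" "norm w ^ n * R ^ n \<le> (1/2) ^ n"
proof -
  show "norm w \<le> 1" using mult_left_mono[OF R_ge_1 norm_ge_zero[of w]] assms by simp
  show "norm w ^ n * R ^ n \<le> (1/2) ^ n"
    unfolding power_mult_distrib[symmetric] using assms R_ge_1 by (intro power_mono) auto
qed

lemma product_integral_series:
  assumes w: "w \<noteq> 0" "norm w * R \<le> 1/2" "Im (1 / w) \<noteq> 0"
  shows "(\<lambda>n. complex_of_real (\<integral>p. power_ddiff n (fst p) (snd p) \<partial>P) * w ^ Suc n)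
    sums (\<integral>p. resolvent (1 / w) (fst p) * resolvent (1 / w) (snd p) \<partial>P)"
proof -
  note [measurable] = measurable_resolvent[OF w(3)]
  have [measurable]: "(\<lambda>p. power_ddiff n (fst p) (snd p)) \<in> borel_measurable (borel \<Otimes>\<^sub>M borel)" for n
    unfolding power_ddiff_def by measurable
  have "(\<lambda>n. \<integral>p. complex_of_real (power_ddiff n (fst p) (snd p)) * w ^ Suc n \<partial>P)
      sums (\<integral>p. resolvent (1 / w) (fst p) * resolvent (1 / w) (snd p) \<partial>P)"
  proof (rule P.sums_integral_dominated[where b="\<lambda>n. real (Suc n) * (1/2) ^ n"])
    show "(\<lambda>p. complex_of_real (power_ddiff n (fst p) (snd p)) * w ^ Suc n) \<in> borel_measurable P" for n
      unfolding measurable_P by measurable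
    show "(\<lambda>p. resolvent (1 / w) (fst p) * resolvent (1 / w) (snd p)) \<in> borel_measurable P"
      unfolding measurable_P by measurable
    show "summable (\<lambda>n. real (Suc n) * (1/2::real) ^ n)"
      using geometric_deriv_sums[of "1/2::real"] by (auto dest: sums_summable)
    show "AE p in P. norm (complex_of_real (power_ddiff n (fst p) (snd p)) * w ^ Suc n)
        \<le> real (Suc n) * (1/2) ^ n" for n
      using supp_P
    proof eventually_elim
      case (elim p)
      have "norm (complex_of_real (power_ddiff n (fst p) (snd p)) * w ^ Suc n)
          = \<bar>power_ddiff n (fst p) (snd p)\<bar> * (norm w ^ n * norm w)"
        by (simp add: norm_mult norm_power)
      also have "\<dots> \<le> (real n * R ^ n) * (norm w ^ n * 1)"
        using elim small_parameter[OF w(2)] R_ge_1 by (intro mult_mono power_ddiff_bound) auto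
      also have "\<dots> = real n * (norm w ^ n * R ^ n)" by simp
      also have "\<dots> \<le> real (Suc n) * (1/2) ^ n"
        using small_parameter[OF w(2)] R_ge_1 by (intro mult_mono) auto
      finally show ?case .
    qed
    show "AE p in P. (\<lambda>n. complex_of_real (power_ddiff n (fst p) (snd p)) * w ^ Suc n)
        sums (resolvent (1 / w) (fst p) * resolvent (1 / w) (snd p))"
      using supp_P
    proof eventually_elim
      case (elim p)
      have "norm w * \<bar>t\<bar> < 1" if "\<bar>t\<bar> \<le> R" for t
        using mult_left_mono[OF that norm_ge_zero[of w]] w(2) by linarith
      then show ?case using elim by (intro resolvent_product_series w(1)) auto
    qed
  qed
  then show ?thesis by simp
qed

lemma moment_series:
  assumes w: "w \<noteq> 0" "norm w * R \<le> 1/2" "Im (1 / w) \<noteq> 0"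
  shows "(\<lambda>n. complex_of_real (\<integral>x. (x - \<beta>) * x ^ n \<partial>Mu) * w ^ Suc n)
    sums (\<integral>x. complex_of_real (x - \<beta>) * resolvent (1 / w) x \<partial>Mu)"
proof -
  note [measurable] = measurable_resolvent[OF w(3)]
  have "(\<lambda>n. \<integral>x. complex_of_real ((x - \<beta>) * x ^ n) * w ^ Suc n \<partial>Mu)
      sums (\<integral>x. complex_of_real (x - \<beta>) * resolvent (1 / w) x \<partial>Mu)"
  proof (rule M2.sums_integral_dominated[where b="\<lambda>n. (R + \<bar>\<beta>\<bar>) * (1/2) ^ n"])
    show "(\<lambda>x. complex_of_real ((x - \<beta>) * x ^ n) * w ^ Suc n) \<in> borel_measurable Mu" for n
      unfolding measurable_Mu by measurable
    show "(\<lambda>x. complex_of_real (x - \<beta>) * resolvent (1 / w) x) \<in> borel_measurable Mu"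
      unfolding measurable_Mu by measurable
    show "summable (\<lambda>n. (R + \<bar>\<beta>\<bar>) * (1/2::real) ^ n)"
      by (intro summable_mult summable_geometric) auto
    show "AE x in Mu. norm (complex_of_real ((x - \<beta>) * x ^ n) * w ^ Suc n)
        \<le> (R + \<bar>\<beta>\<bar>) * (1/2) ^ n" for n
      using supp_Mu
    proof eventually_elim
      case (elim x)
      have "norm (complex_of_real ((x - \<beta>) * x ^ n) * w ^ Suc n)
          = \<bar>x - \<beta>\<bar> * (\<bar>x\<bar> ^ n * norm w ^ n) * norm w"
        by (simp add: norm_mult norm_power abs_mult power_abs del: of_real_diff)
      also have "\<dots> \<le> (R + \<bar>\<beta>\<bar>) * (1/2) ^ n * 1"
      proof (intro mult_mono)
        show "\<bar>x - \<beta>\<bar> \<le> R + \<bar>\<beta>\<bar>" using elim by linarith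
        have "\<bar>x\<bar> ^ n * norm w ^ n \<le> R ^ n * norm w ^ n"
          using elim by (intro mult_right_mono power_mono) auto
        then show "\<bar>x\<bar> ^ n * norm w ^ n \<le> (1/2) ^ n"
          using small_parameter(2)[OF w(2), of n] by (simp add: mult.commute)
      qed (use small_parameter[OF w(2)] R_ge_1 in auto)
      finally show ?case by simp
    qed
    show "AE x in Mu. (\<lambda>n. complex_of_real ((x - \<beta>) * x ^ n) * w ^ Suc n)
        sums (complex_of_real (x - \<beta>) * resolvent (1 / w) x)"
      using supp_Mu
    proof eventually_elim
      case (elim x)
      have "norm w * \<bar>x\<bar> < 1"
        using mult_left_mono[OF elim norm_ge_zero[of w]] w(2) by linarith
      then have "(\<lambda>n. complex_of_real (x - \<beta>) * (complex_of_real (x ^ n) * w ^ Suc n))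
          sums (complex_of_real (x - \<beta>) * resolvent (1 / w) x)"
        by (intro sums_mult resolvent_series w(1))
      then show ?case by (simp add: mult_ac)
    qed
  qed
  then show ?thesis by (simp only: integral_mult_left_zero integral_complex_of_real)
qed

lemma resolvent_defect_series:
  assumes w: "w \<noteq> 0" "norm w * R \<le> 1/2" "Im (1 / w) \<noteq> 0"
  shows "(\<lambda>n. complex_of_real (defect (\<lambda>x. x ^ n) (\<lambda>x. real n * x ^ (n - 1))) * w ^ Suc n)
    sums resolvent_defect (1 / w)"
proof -
  have "(\<lambda>n. complex_of_real (\<integral>p. power_ddiff n (fst p) (snd p) \<partial>P) * w ^ Suc n
      - complex_of_real (1/\<gamma>) * (complex_of_real (\<integral>x. (x - \<beta>) * x ^ n \<partial>Mu) * w ^ Suc n))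
    sums resolvent_defect (1 / w)"
    unfolding resolvent_defect_def
    by (rule sums_diff[OF product_integral_series[OF w] sums_mult[OF moment_series[OF w]]])
  then show ?thesis unfolding defect_def ddiff_power by (simp add: algebra_simps)
qed

lemma monomial_defect_bound:
  "\<bar>defect (\<lambda>x. x ^ n) (\<lambda>x. real n * x ^ (n - 1))\<bar> \<le> (1 + (R + \<bar>\<beta>\<bar>) / \<gamma>) * real (Suc n) * R ^ n"
proof -
  have [measurable]: "(\<lambda>p. power_ddiff n (fst p) (snd p)) \<in> borel_measurable (borel \<Otimes>\<^sub>M borel)"
    unfolding power_ddiff_def by measurable
  have growth: "real n * R ^ n \<le> real (Suc n) * R ^ n" "R ^ n \<le> real (Suc n) * R ^ n"
    using R_ge_1 by (auto intro!: mult_right_mono)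
  have ddiff_part: "norm (\<integral>p. power_ddiff n (fst p) (snd p) \<partial>P) \<le> real n * R ^ n"
    by (rule P_bounded_integral(2)) (use power_ddiff_bound R_ge_1 in auto)
  have moment_part: "norm (\<integral>x. (x - \<beta>) * x ^ n \<partial>Mu) \<le> (R + \<bar>\<beta>\<bar>) * R ^ n"
  proof (rule Mu_bounded_integral(2))
    fix x :: real assume x: "\<bar>x\<bar> \<le> R"
    have "\<bar>x - \<beta>\<bar> \<le> R + \<bar>\<beta>\<bar>" "\<bar>x\<bar> ^ n \<le> R ^ n" using x by (auto intro: power_mono)
    then show "norm ((x - \<beta>) * x ^ n) \<le> (R + \<bar>\<beta>\<bar>) * R ^ n"
      unfolding real_norm_def abs_mult power_abs by (intro mult_mono) auto
  qed measurable
  have "\<bar>defect (\<lambda>x. x ^ n) (\<lambda>x. real n * x ^ (n - 1))\<bar>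
      \<le> \<bar>\<integral>p. power_ddiff n (fst p) (snd p) \<partial>P\<bar> + \<bar>\<integral>x. (x - \<beta>) * x ^ n \<partial>Mu\<bar> / \<gamma>"
    unfolding defect_def ddiff_power using gamma_pos
      abs_triangle_ineq4[of "\<integral>p. power_ddiff n (fst p) (snd p) \<partial>P" "(\<integral>x. (x - \<beta>) * x ^ n \<partial>Mu) / \<gamma>"]
    by (simp add: abs_divide)
  also have "\<dots> \<le> real (Suc n) * R ^ n + (R + \<bar>\<beta>\<bar>) * (real (Suc n) * R ^ n) / \<gamma>"
  proof (intro add_mono divide_right_mono)
    show "\<bar>\<integral>p. power_ddiff n (fst p) (snd p) \<partial>P\<bar> \<le> real (Suc n) * R ^ n"
      using ddiff_part growth(1) by simp
    have "(R + \<bar>\<beta>\<bar>) * R ^ n \<le> (R + \<bar>\<beta>\<bar>) * (real (Suc n) * R ^ n)"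
      using growth(2) R_ge_1 by (intro mult_left_mono) auto
    then show "\<bar>\<integral>x. (x - \<beta>) * x ^ n \<partial>Mu\<bar> \<le> (R + \<bar>\<beta>\<bar>) * (real (Suc n) * R ^ n)"
      using moment_part by simp
  qed (use gamma_pos in simp)
  also have "\<dots> = (1 + (R + \<bar>\<beta>\<bar>) / \<gamma>) * real (Suc n) * R ^ n" by (simp add: algebra_simps)
  finally show ?thesis .
qed

lemma defect_vanishes_if_resolvent_defect_vanishes:
  assumes resolvent: "\<And>z. Im z \<noteq> 0 \<Longrightarrow> resolvent_defect z = 0" and f: "has_C1_deriv f f'"
  shows "defect f f' = 0"
proof (rule defect_vanishes_if_monomials[OF _ f])
  fix n
  show "defect (\<lambda>x. x ^ n) (\<lambda>x. real n * x ^ (n - 1)) = 0"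
  proof (rule powser_vanishing_on_segment[where c="\<lambda>m. defect (\<lambda>x. x ^ m) (\<lambda>x. real m * x ^ (m - 1))"
        and k=n and R=R and C="1 + (R + \<bar>\<beta>\<bar>) / \<gamma>" and u=\<i> and \<delta>="1 / (2 * R)"])
    show "0 \<le> 1 + (R + \<bar>\<beta>\<bar>) / \<gamma>" using R_ge_1 gamma_pos by (simp add: add_nonneg_nonneg)
    fix s :: real assume s: "0 < s" "s \<le> 1 / (2 * R)"
    define w where "w = complex_of_real s * \<i>"
    have "1 / w = complex_of_real (-1 / s) * \<i>" using s by (simp add: w_def field_simps)
    then have "Im (1 / w) \<noteq> 0" using s by simp
    moreover have "w \<noteq> 0" "norm w * R \<le> 1/2"
      using s R_ge_1 by (auto simp: w_def norm_mult field_simps)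
    ultimately have w: "w \<noteq> 0" "norm w * R \<le> 1/2" "Im (1 / w) \<noteq> 0" by auto
    show "(\<lambda>n. complex_of_real (defect (\<lambda>x. x ^ n) (\<lambda>x. real n * x ^ (n - 1)))
        * (complex_of_real s * \<i>) ^ Suc n) sums 0"
      using resolvent_defect_series[OF w] resolvent[OF w(3)] unfolding w_def by simp
  qed (use R_ge_1 monomial_defect_bound in auto)
qed

lemma defect_vanishes_iff:
  "(\<forall>f f'. has_C1_deriv f f' \<longrightarrow> defect f f' = 0) \<longleftrightarrow> (\<forall>z. Im z \<noteq> 0 \<longrightarrow> resolvent_defect z = 0)"
proof (intro iffI allI impI)
  fix z :: complex assume vanish: "\<forall>f f'. has_C1_deriv f f' \<longrightarrow> defect f f' = 0" and z: "Im z \<noteq> 0"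
  have "defect (\<lambda>x. Re (resolvent z x)) (\<lambda>x. Re ((resolvent z x)^2)) = 0"
    using vanish has_C1_deriv_Re_resolvent[OF z] by blast
  moreover have "defect (\<lambda>x. Im (resolvent z x)) (\<lambda>x. Im ((resolvent z x)^2)) = 0"
    using vanish has_C1_deriv_Im_resolvent[OF z] by blast
  ultimately show "resolvent_defect z = 0"
    unfolding defect_Re_resolvent[OF z] defect_Im_resolvent[OF z] by (simp add: complex_eq_iff)
next
  fix f f' assume "\<forall>z. Im z \<noteq> 0 \<longrightarrow> resolvent_defect z = 0" and "has_C1_deriv f f'"
  then show "defect f f' = 0" by (intro defect_vanishes_if_resolvent_defect_vanishes) auto
qed

lemma C1_identity_iff_defect_vanishes:
  "(\<forall>f. C1_real f \<longrightarrow> (\<integral>p. divdiff f (fst p) (snd p) \<partial>P) = (1 / \<gamma>) * (\<integral>x. (x - \<beta>) * f x \<partial>Mu))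
    \<longleftrightarrow> (\<forall>f f'. has_C1_deriv f f' \<longrightarrow> defect f f' = 0)"
  unfolding C1_real_iff_has_C1_deriv
proof (intro iffI allI impI)
  fix f f' assume "\<forall>f. (\<exists>f'. has_C1_deriv f f') \<longrightarrow>
      (\<integral>p. divdiff f (fst p) (snd p) \<partial>P) = (1 / \<gamma>) * (\<integral>x. (x - \<beta>) * f x \<partial>Mu)"
    and f: "has_C1_deriv f f'"
  then show "defect f f' = 0" using defect_eq_0_iff[OF f] by blast
next
  fix f assume vanish: "\<forall>f f'. has_C1_deriv f f' \<longrightarrow> defect f f' = 0" and "\<exists>f'. has_C1_deriv f f'"
  then obtain f' where f: "has_C1_deriv f f'" by blast
  then show "(\<integral>p. divdiff f (fst p) (snd p) \<partial>P) = (1 / \<gamma>) * (\<integral>x. (x - \<beta>) * f x \<partial>Mu)"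
    using defect_eq_0_iff[OF f] vanish by blast
qed

end

lemma cs_prob_support_bound:
  assumes "cs_prob M"
  obtains R where "R \<ge> 1" "AE x in M. \<bar>x\<bar> \<le> R"
proof -
  from assms obtain K where P: "prob_space M" and S: "sets M = sets borel"
    and K: "compact K" "emeasure M K = 1"
    unfolding cs_prob_def by blast
  interpret prob_space M by (rule P)
  have "K \<in> sets M" using S K(1) by (simp add: borel_closed compact_imp_closed)
  then have in_K: "AE x in M. x \<in> K"
    using AE_in_set_eq_1 K(2) by (simp add: emeasure_eq_measure)
  obtain B where B: "\<forall>x\<in>K. norm x \<le> B"
    using compact_imp_bounded[OF K(1)] bounded_iff by metis
  have "AE x in M. \<bar>x\<bar> \<le> max 1 B" using in_K by eventually_elim (use B in auto)
  then show ?thesis using that[of "max 1 B"] by auto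
qed

theorem lemma4p2:
  fixes \<mu> \<nu> :: "real measure" and \<beta> \<gamma> :: real
  assumes "cs_prob \<mu>" and "cs_prob \<nu>" and "\<gamma> > 0"
  shows "(\<forall>f. C1_real f \<longrightarrow>
            (\<integral>p. divdiff f (fst p) (snd p) \<partial>(\<nu> \<Otimes>\<^sub>M \<mu>))
              = (1 / \<gamma>) * (\<integral>x. (x - \<beta>) * f x \<partial>\<mu>))
         \<longleftrightarrow>
         (\<forall>z. Im z \<noteq> 0 \<longrightarrow>
            cauchy_transform \<mu> z
              = 1 / (z - complex_of_real \<beta> - complex_of_real \<gamma> * cauchy_transform \<nu> z))"
proof -
  obtain R\<^sub>\<mu> where R\<^sub>\<mu>: "R\<^sub>\<mu> \<ge> 1" "AE x in \<mu>. \<bar>x\<bar> \<le> R\<^sub>\<mu>"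
    using cs_prob_support_bound[OF assms(1)] .
  obtain R\<^sub>\<nu> where R\<^sub>\<nu>: "AE x in \<nu>. \<bar>x\<bar> \<le> R\<^sub>\<nu>"
    using cs_prob_support_bound[OF assms(2)] .
  define R where "R = max R\<^sub>\<mu> R\<^sub>\<nu>"
  have prob: "prob_space \<mu>" "prob_space \<nu>" and sets: "sets \<mu> = sets borel" "sets \<nu> = sets borel"
    using assms(1,2) unfolding cs_prob_def by auto
  interpret pair_prob_space \<nu> \<mu>
    using prob by (simp add: pair_prob_space_def pair_sigma_finite_def prob_space_imp_sigma_finite)
  interpret compact_pair \<nu> \<mu> R \<beta> \<gamma>
  proof
    show "AE x in \<mu>. \<bar>x\<bar> \<le> R" using R\<^sub>\<mu>(2) by eventually_elim (simp add: R_def)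
    show "AE x in \<nu>. \<bar>x\<bar> \<le> R" using R\<^sub>\<nu> by eventually_elim (simp add: R_def)
  qed (use sets R\<^sub>\<mu>(1) assms(3) in \<open>auto simp: R_def\<close>)
  have "(\<forall>f. C1_real f \<longrightarrow> (\<integral>p. divdiff f (fst p) (snd p) \<partial>(\<nu> \<Otimes>\<^sub>M \<mu>))
              = (1 / \<gamma>) * (\<integral>x. (x - \<beta>) * f x \<partial>\<mu>))
      \<longleftrightarrow> (\<forall>z. Im z \<noteq> 0 \<longrightarrow> resolvent_defect z = 0)"
    unfolding C1_identity_iff_defect_vanishes defect_vanishes_iff ..
  also have "\<dots> \<longleftrightarrow> (\<forall>z. Im z \<noteq> 0 \<longrightarrow> cauchy_transform \<mu> z
      = 1 / (z - complex_of_real \<beta> - complex_of_real \<gamma> * cauchy_transform \<nu> z))"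
    using resolvent_defect_eq_0_iff by auto
  finally show ?thesis .
qed

end
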